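(* Let $(a_n)_{n\ge1}$ be an increasing sequence of positive integers and $x\in\mathbb{R}^d$. Then for every nonempty dyadic cube $\lambda\subseteq[0,1)^d$, $\liminf_{j\to\infty}2^{-dj}\#\mathrm{M}((\{a_nx\})_{n\ge1};\lambda,j)\ge\dfrac{\kappa_*(x)^d\,\underline{\delta}((a_n))}{2^d\mathcal{L}^d(\lambda)}\,\underline{\rho}((a_nx)_{n\ge1};\lambda)$.
   Context: $\mathcal{L}^d$ is Lebesgue measure; $\{z\}$ is the coordinatewise fractional part. For $z\in\mathbb{R}^d$, $\|z\|=\inf_{p\in\mathbb{Z}^d}|z-p|_\infty$, and $\kappa_*(x)=\inf_{q\in\mathbb{N}}q^{1/d}\|qx\|$. $\underline{\delta}((a_n))=\liminf_{N\to\infty}\frac1N\#\{n\ge1:a_n\le N\}$. For a sequence $(y_n)$ in $\mathbb{R}^d$ and a nonempty dyadic cube $\lambda\subseteq[0,1)^d$, $\underline{\rho}((y_n)_{n\ge1};\lambda)=\liminf_{N\to\infty}\frac1N\#\{n\in\{1,\dots,N\}:\{y_n\}\in\lambda\}$. A dyadic cube is $\lambda=2^{-j}(k+[0,1)^d)$, $j\in\mathbb{Z}$, $k\in\mathbb{Z}^d$, with generation $\langle\lambda\rangle=j$; $\mathrm{M}((x_n)_{n\ge1};\lambda,j)$ is the set of dyadic cubes $\lambda'\subseteq\lambda$ of generation $\langle\lambda\rangle+j$ such that $x_n\in\lambda'$ for some $n\le2^{d\langle\lambda'\rangle}$. *)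

theory Defs
  imports "HOL-Analysis.Analysis"
begin

definition fracv :: "real^'n \<Rightarrow> real^'n" where
  "fracv z = (\<chi> i. frac (z $ i))"

definition dist_int :: "real^'n::finite \<Rightarrow> real" where
  "dist_int z = (INF p \<in> {p :: real^'n. \<forall>i. p $ i \<in> \<int>}. Max (range (\<lambda>i. \<bar>z $ i - p $ i\<bar>)))"

definition kappa_star :: "real^'n::finite \<Rightarrow> real" where
  "kappa_star x = (INF q \<in> {q::nat. q \<ge> 1}.
      real q powr (1 / real CARD('n)) * dist_int (of_nat q *\<^sub>R x))"

text \<open>Lower density of the range of a sequence indexed from 1.\<close>
definition lower_density :: "(nat \<Rightarrow> nat) \<Rightarrow> ereal" where
  "lower_density a = liminf (\<lambda>N. ereal (real (card {n. n \<ge> 1 \<and> a n \<le> N}) / real N))"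

definition dyadic_cube :: "int \<Rightarrow> int^'n \<Rightarrow> (real^'n) set" where
  "dyadic_cube j k = {y. \<forall>i. 2 powr (- real_of_int j) * real_of_int (k $ i) \<le> y $ i \<and>
                           y $ i < 2 powr (- real_of_int j) * (real_of_int (k $ i) + 1)}"

definition dyadic_cubes :: "(real^'n) set set" where
  "dyadic_cubes = {c. \<exists>j k. c = dyadic_cube j k}"

definition generation :: "(real^'n) set \<Rightarrow> int" where
  "generation c = (THE j. \<exists>k. c = dyadic_cube j k)"

definition unit_cube :: "(real^'n) set" where
  "unit_cube = {y. \<forall>i. 0 \<le> y $ i \<and> y $ i < 1}"

definition lower_freq :: "(nat \<Rightarrow> real^'n) \<Rightarrow> (real^'n) set \<Rightarrow> ereal" where
  "lower_freq y c = liminf (\<lambda>N. ereal (real (card {n \<in> {1..N}. fracv (y n) \<in> c}) / real N))"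

definition Mset :: "(nat \<Rightarrow> real^'n::finite) \<Rightarrow> (real^'n) set \<Rightarrow> nat \<Rightarrow> (real^'n) set set" where
  "Mset xs c j = {c'. c' \<in> dyadic_cubes \<and> c' \<noteq> {} \<and> c' \<subseteq> c \<and> generation c' = generation c + int j \<and>
       (\<exists>n. n \<ge> 1 \<and> real n \<le> 2 powr (real CARD('n) * real_of_int (generation c')) \<and> xs n \<in> c')}"

end

theory Submission
  imports Defs
begin

text \<open>
  Let \<lambda> have generation g, fix j and put N = 2^(d(g+j)). Every n \<le> N with {a_n x} \<in> \<lambda> lies in
  a subcube of generation g + j that is counted in M. If n < n' land in the same subcube, then
  (a_n' - a_n) x is within 2^-(g+j) of an integer point, so the definition of \<kappa>_* forces
  a_n' - a_n > \<kappa>_*(x)^d N; hence each subcube receives at most a_N / (\<kappa>_*(x)^d N) + 1 of these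
  indices. Given u < \<rho> and v < \<delta>, for large j there are more than u N such indices and
  a_N < N / v, so #M \<ge> u v \<kappa>_*(x)^d N / 2, while 2^(-dj) N = 1 / L(\<lambda>).
\<close>

section \<open>Dyadic cubes\<close>

lemma mem_dyadic_cube_iff:
  "y \<in> dyadic_cube J k \<longleftrightarrow> k = (\<chi> i. \<lfloor>2 powr real_of_int J * y $ i\<rfloor>)"
proof -
  have "2 powr (- real_of_int J) * real_of_int m \<le> t \<and> t < 2 powr (- real_of_int J) * (real_of_int m + 1)
        \<longleftrightarrow> m = \<lfloor>2 powr real_of_int J * t\<rfloor>" for m :: int and t :: real
  proof -
    have "2 powr (- real_of_int J) * real_of_int m \<le> t \<and> t < 2 powr (- real_of_int J) * (real_of_int m + 1)
          \<longleftrightarrow> real_of_int m \<le> 2 powr real_of_int J * t \<and> 2 powr real_of_int J * t < real_of_int m + 1"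
      by (simp add: powr_minus field_simps)
    then show ?thesis
      by (metis floor_eq_iff)
  qed
  then show ?thesis
    by (simp add: dyadic_cube_def vec_eq_iff)
qed

definition dyadic_cube_of :: "int \<Rightarrow> real^'n \<Rightarrow> (real^'n) set" where
  "dyadic_cube_of J y = dyadic_cube J (\<chi> i. \<lfloor>2 powr real_of_int J * y $ i\<rfloor>)"

lemma mem_dyadic_cube_of: "y \<in> dyadic_cube_of J y"
  by (simp add: dyadic_cube_of_def mem_dyadic_cube_iff)

lemma dyadic_cube_eq_dyadic_cube_of: "y \<in> dyadic_cube J k \<Longrightarrow> dyadic_cube J k = dyadic_cube_of J y"
  by (simp add: dyadic_cube_of_def mem_dyadic_cube_iff)

lemma floor_dyadic_coarsen:
  "\<lfloor>2 powr real_of_int g * t\<rfloor> = \<lfloor>2 powr real_of_int (g + int e) * t\<rfloor> div 2 ^ e"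
proof -
  have "2 powr real_of_int g * t = 2 powr real_of_int (g + int e) * t / real_of_int (2 ^ e)"
    by (simp add: powr_add powr_realpow)
  then show ?thesis
    by (metis floor_divide_real_eq_div zero_le_power zero_le_numeral)
qed

lemma dyadic_cube_of_subset:
  assumes "y \<in> dyadic_cube g k"
  shows "dyadic_cube_of (g + int e) y \<subseteq> dyadic_cube g k"
proof
  fix z
  assume "z \<in> dyadic_cube_of (g + int e) y"
  then have "\<lfloor>2 powr real_of_int (g + int e) * z $ i\<rfloor> = \<lfloor>2 powr real_of_int (g + int e) * y $ i\<rfloor>" for i
    by (simp add: dyadic_cube_of_def mem_dyadic_cube_iff vec_eq_iff)
  then have "\<lfloor>2 powr real_of_int g * z $ i\<rfloor> = \<lfloor>2 powr real_of_int g * y $ i\<rfloor>" for i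
    by (simp only: floor_dyadic_coarsen[of g _ e])
  with assms show "z \<in> dyadic_cube g k"
    by (simp add: mem_dyadic_cube_iff vec_eq_iff)
qed

lemma measure_dyadic_cube:
  "measure lborel (dyadic_cube g k :: (real^'n) set) = (2 powr (- real_of_int g)) ^ CARD('n)"
proof -
  define w where "w = 2 powr (- real_of_int g)"
  define l :: "real^'n" where "l = (\<chi> i. w * k$i)"
  define u :: "real^'n" where "u = (\<chi> i. w * (k$i + 1))"
  have w: "w > 0" unfolding w_def by simp
  have cube: "dyadic_cube g k = {y. \<forall>i. l$i \<le> y$i \<and> y$i < u$i}"
    by (auto simp: dyadic_cube_def l_def u_def w_def)
  have "{y \<in> space lborel. \<forall>i\<in>UNIV. l$i \<le> y$i \<and> y$i < u$i} \<in> sets lborel"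
    by measurable
  then have meas: "dyadic_cube g k \<in> sets lborel"
    by (simp add: cube)
  have box: "box l u \<subseteq> dyadic_cube g k" and cbox: "dyadic_cube g k \<subseteq> cbox l u"
    by (auto simp: cube mem_box_cart less_imp_le)
  have fm: "dyadic_cube g k \<in> fmeasurable lborel"
    by (rule fmeasurableI2[OF fmeasurable_cbox cbox meas])
  have "l \<in> cbox l u"
    using w by (simp add: mem_box_cart l_def u_def)
  then have "cbox l u \<noteq> {}"
    by blast
  then have "measure lborel (cbox l u) = w ^ CARD('n)"
    by (simp add: content_cbox_cart l_def u_def algebra_simps)
  moreover have "measure lborel (box l u) = measure lborel (cbox l u)"
    by (simp add: measure_lborel_box_eq measure_lborel_cbox_eq)
  moreover have "measure lborel (box l u) \<le> measure lborel (dyadic_cube g k)"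
    by (rule measure_mono_fmeasurable[OF box _ fm]) simp
  moreover have "measure lborel (dyadic_cube g k) \<le> measure lborel (cbox l u)"
    by (rule measure_mono_fmeasurable[OF cbox meas]) simp
  ultimately show ?thesis
    unfolding w_def by linarith
qed

lemma generation_dyadic_cube [simp]: "generation (dyadic_cube j k :: (real^'n) set) = j"
proof -
  have "j' = j" if "dyadic_cube j' k' = (dyadic_cube j k :: (real^'n) set)" for j' k'
  proof -
    have "(2 powr (- real_of_int j')) ^ CARD('n) = (2 powr (- real_of_int j)) ^ CARD('n)"
      using measure_dyadic_cube[of j' k'] measure_dyadic_cube[of j k] that
      by simp
    then have "2 powr (- real_of_int j') = 2 powr (- real_of_int j)"
      by (simp add: power_eq_iff_eq_base)
    then show ?thesis
      by (simp add: powr_inj)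
  qed
  then show ?thesis
    unfolding generation_def by (intro the_equality) blast+
qed

lemma two_powr_eq_power_nat:
  assumes "0 \<le> J"
  shows "2 powr (real d * real_of_int J) = real (2 ^ (d * nat J) :: nat)"
  using assms by (simp add: powr_realpow[symmetric])

lemma Mset_dyadic_cube_eq_image:
  fixes y :: "nat \<Rightarrow> real^'n::finite"
  assumes "0 \<le> g + int j"
  defines "N \<equiv> 2 ^ (CARD('n) * nat (g + int j)) :: nat"
  shows "Mset y (dyadic_cube g k) j
    = (\<lambda>n. dyadic_cube_of (g + int j) (y n)) ` {n \<in> {1..N}. y n \<in> dyadic_cube g k}"
proof -
  have bound: "real n \<le> 2 powr (real CARD('n) * real_of_int (g + int j)) \<longleftrightarrow> n \<le> N" for n
    using two_powr_eq_power_nat[OF assms(1)] by (simp add: N_def)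
  show ?thesis
  proof (intro set_eqI iffI)
    fix C
    assume "C \<in> Mset y (dyadic_cube g k) j"
    then have C: "C \<in> dyadic_cubes" "C \<subseteq> dyadic_cube g k" "generation C = g + int j"
      and "\<exists>n. 1 \<le> n \<and> real n \<le> 2 powr (real CARD('n) * real_of_int (generation C)) \<and> y n \<in> C"
      unfolding Mset_def by auto
    then obtain n where n: "1 \<le> n" "n \<le> N" "y n \<in> C"
      by (auto simp only: bound)
    obtain k' where "C = dyadic_cube (g + int j) k'"
      using C(1,3) by (auto simp: dyadic_cubes_def)
    then have "C = dyadic_cube_of (g + int j) (y n)"
      using dyadic_cube_eq_dyadic_cube_of n(3) by blast
    moreover have "n \<in> {n \<in> {1..N}. y n \<in> dyadic_cube g k}"
      using n C(2) by auto
    ultimately show "C \<in> (\<lambda>n. dyadic_cube_of (g + int j) (y n)) ` {n \<in> {1..N}. y n \<in> dyadic_cube g k}"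
      by (rule image_eqI)
  next
    fix C
    assume "C \<in> (\<lambda>n. dyadic_cube_of (g + int j) (y n)) ` {n \<in> {1..N}. y n \<in> dyadic_cube g k}"
    then obtain n where n: "n \<in> {1..N}" "y n \<in> dyadic_cube g k" and C: "C = dyadic_cube_of (g + int j) (y n)"
      by blast
    have "y n \<in> C"
      by (simp add: C mem_dyadic_cube_of)
    moreover have "C \<subseteq> dyadic_cube g k"
      unfolding C by (rule dyadic_cube_of_subset[OF n(2)])
    moreover have "C \<in> dyadic_cubes" and gen: "generation C = g + int j"
      unfolding C dyadic_cube_of_def dyadic_cubes_def by auto
    moreover have "real n \<le> 2 powr (real CARD('n) * real_of_int (generation C))"
      unfolding gen bound using n(1) by simp
    ultimately show "C \<in> Mset y (dyadic_cube g k) j"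
      using n(1) unfolding Mset_def by auto
  qed
qed

section \<open>Distance to the integer lattice and the constant \<open>\<kappa>\<^sub>*\<close>\<close>

lemma dist_int_le:
  assumes "\<forall>i. p $ i \<in> \<int>"
  shows "dist_int (z :: real^'n::finite) \<le> Max (range (\<lambda>i. \<bar>z $ i - p $ i\<bar>))"
  unfolding dist_int_def
  by (rule cINF_lower) (auto intro!: bdd_belowI[of _ 0] simp: assms Max_ge_iff)

lemma dist_int_nonneg: "0 \<le> dist_int (z :: real^'n::finite)"
  unfolding dist_int_def
  by (rule cINF_greatest) (auto intro: exI[of _ 0] simp: Max_ge_iff)

lemma dist_int_diff_lt:
  fixes u v :: "real^'n::finite"
  assumes "fracv u \<in> dyadic_cube J k" and "fracv v \<in> dyadic_cube J k"
  shows "dist_int (v - u) < 2 powr (- real_of_int J)"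
proof -
  define w where "w = 2 powr (- real_of_int J)"
  define p :: "real^'n" where "p = (\<chi> i. of_int (\<lfloor>v $ i\<rfloor> - \<lfloor>u $ i\<rfloor>))"
  have "\<bar>(v - u) $ i - p $ i\<bar> < w" for i
  proof -
    have eq: "(v - u) $ i - p $ i = frac (v $ i) - frac (u $ i)"
      by (simp add: p_def frac_def)
    have bounds: "w * k $ i \<le> frac (z $ i) \<and> frac (z $ i) < w * k $ i + w" if "z \<in> {u, v}" for z
      using assms that by (auto simp: dyadic_cube_def fracv_def w_def algebra_simps)
    show ?thesis
      unfolding eq using bounds[of u] bounds[of v] by (auto simp: abs_less_iff)
  qed
  then have "Max (range (\<lambda>i. \<bar>(v - u) $ i - p $ i\<bar>)) < w"
    by simp
  moreover have "dist_int (v - u) \<le> Max (range (\<lambda>i. \<bar>(v - u) $ i - p $ i\<bar>))"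
    by (rule dist_int_le) (simp add: p_def)
  ultimately show ?thesis
    unfolding w_def by linarith
qed

lemma kappa_star_le:
  assumes "1 \<le> q"
  shows "kappa_star (x :: real^'n::finite) \<le> real q powr (1 / real CARD('n)) * dist_int (real q *\<^sub>R x)"
  unfolding kappa_star_def using assms
  by (intro cINF_lower) (auto intro!: bdd_belowI[of _ 0] mult_nonneg_nonneg dist_int_nonneg)

lemma kappa_star_nonneg: "0 \<le> kappa_star (x :: real^'n::finite)"
  unfolding kappa_star_def
  by (rule cINF_greatest) (auto intro!: mult_nonneg_nonneg dist_int_nonneg)

lemma kappa_star_le_half: "kappa_star (x :: real^'n::finite) \<le> 1/2"
proof -
  have "kappa_star x \<le> dist_int x"
    using kappa_star_le[of 1 x] by simp
  also have "\<dots> \<le> Max (range (\<lambda>i. \<bar>x $ i - (\<chi> i. of_int (round (x $ i)) :: real^'n) $ i\<bar>))"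
    by (rule dist_int_le) auto
  also have "\<dots> \<le> 1/2"
    using of_int_round_abs_le[where 'a=real] by (subst Max_le_iff) (auto simp: abs_minus_commute)
  finally show ?thesis .
qed

lemma kappa_star_separation:
  fixes x :: "real^'n::finite"
  assumes "m < n"
    and "fracv (real m *\<^sub>R x) \<in> dyadic_cube J k" and "fracv (real n *\<^sub>R x) \<in> dyadic_cube J k"
  shows "kappa_star x ^ CARD('n) * 2 powr (real CARD('n) * real_of_int J) < real (n - m)"
proof -
  define d where "d = CARD('n)"
  define q where "q = real (n - m)"
  define w where "w = 2 powr (- real_of_int J)"
  have q: "1 \<le> n - m" "0 < q"
    using assms(1) by (auto simp: q_def)
  have "real n *\<^sub>R x - real m *\<^sub>R x = q *\<^sub>R x"
    using assms(1) by (simp add: q_def of_nat_diff scaleR_diff_left)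
  then have "dist_int (q *\<^sub>R x) < w"
    using dist_int_diff_lt[OF assms(2,3)] by (simp add: w_def)
  then have "q powr (1 / real d) * dist_int (q *\<^sub>R x) < q powr (1 / real d) * w"
    using q(2) by (intro mult_strict_left_mono) auto
  then have "kappa_star x < q powr (1 / real d) * w"
    using kappa_star_le[OF q(1), of x] unfolding d_def q_def by linarith
  then have "kappa_star x ^ d < (q powr (1 / real d) * w) ^ d"
    using kappa_star_nonneg[of x] by (intro power_strict_mono) (auto simp: d_def)
  also have "\<dots> = q * w ^ d"
    using q(2) by (simp add: d_def power_mult_distrib powr_power)
  finally have "kappa_star x ^ d * 2 powr (real d * real_of_int J) < q * (w ^ d * 2 powr (real d * real_of_int J))"
    by (simp add: mult.assoc)
  moreover have "w ^ d * 2 powr (real d * real_of_int J) = 1"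
    unfolding w_def using powr_power[of 2 "- real_of_int J" d] by (simp add: powr_add[symmetric])
  ultimately have "kappa_star x ^ d * 2 powr (real d * real_of_int J) < q"
    by (metis mult.right_neutral)
  then show ?thesis
    by (simp only: d_def q_def)
qed

section \<open>Counting\<close>

lemma card_le_of_separated:
  fixes F :: "real set"
  assumes "F \<subseteq> {0..A}" "0 \<le> A" "0 < s"
    and "\<And>u v. u \<in> F \<Longrightarrow> v \<in> F \<Longrightarrow> u < v \<Longrightarrow> s < v - u"
  shows "real (card F) \<le> A / s + 1"
proof -
  define f where "f u = \<lfloor>u / s\<rfloor>" for u
  have "f u < f v" if "u \<in> F" "v \<in> F" "u < v" for u v
  proof -
    have "1 < (v - u) / s"
      using assms(3) assms(4)[OF that] by simp
    then have "u / s + 1 < v / s"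
      by (simp add: diff_divide_distrib)
    then show ?thesis
      unfolding f_def by linarith
  qed
  then have inj: "inj_on f F"
    by (metis inj_onI less_irrefl linorder_neqE)
  have "0 \<le> f u \<and> f u \<le> \<lfloor>A / s\<rfloor>" if "u \<in> F" for u
    using assms(1,3) that by (auto simp: f_def intro!: floor_mono divide_right_mono)
  then have image: "f ` F \<subseteq> {0..\<lfloor>A / s\<rfloor>}"
    by auto
  then have "finite F"
    using inj finite_imageD finite_subset by blast
  have "card F = card (f ` F)"
    using inj by (simp add: card_image)
  also have "\<dots> \<le> card {0..\<lfloor>A / s\<rfloor>}"
    using image by (intro card_mono) auto
  finally have "real (card F) \<le> real (nat (\<lfloor>A / s\<rfloor> + 1))"
    by simp
  also have "\<dots> = real_of_int \<lfloor>A / s\<rfloor> + 1"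
    using assms(2,3) by simp
  finally show ?thesis
    by linarith
qed

lemma card_le_card_image_mult:
  assumes "finite S" and "\<And>y. y \<in> f ` S \<Longrightarrow> real (card {x \<in> S. f x = y}) \<le> B"
  shows "real (card S) \<le> real (card (f ` S)) * B"
proof -
  have "S = (\<Union>y\<in>f ` S. {x \<in> S. f x = y})"
    by blast
  then have "card S \<le> (\<Sum>y\<in>f ` S. card {x \<in> S. f x = y})"
    using card_UN_le[of "f ` S" "\<lambda>y. {x \<in> S. f x = y}"] assms(1) by simp
  then have "real (card S) \<le> (\<Sum>y\<in>f ` S. real (card {x \<in> S. f x = y}))"
    by (metis of_nat_le_iff of_nat_sum)
  also have "\<dots> \<le> real (card (f ` S)) * B"
    using assms(2) by (rule sum_bounded_above)
  finally show ?thesis .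
qed

lemma strict_mono_on_ge_self:
  fixes a :: "nat \<Rightarrow> nat"
  assumes "strict_mono_on {1..} a" "1 \<le> a 1" "1 \<le> n"
  shows "n \<le> a n"
  using assms(3)
proof (induction n rule: dec_induct)
  case (step m)
  then have "a m < a (Suc m)"
    using strict_mono_onD[OF assms(1)] by simp
  with step.IH show ?case
    by simp
qed (use assms(2) in simp)

lemma card_same_dyadic_cube_le:
  fixes a :: "nat \<Rightarrow> nat" and x :: "real^'n::finite"
  assumes mono: "strict_mono_on {1..} a" and kappa: "0 < kappa_star x" and F: "F \<subseteq> {1..N}"
    and cube: "\<And>n. n \<in> F \<Longrightarrow> fracv (real (a n) *\<^sub>R x) \<in> dyadic_cube J k"
  shows "real (card F)
    \<le> real (a N) / (kappa_star x ^ CARD('n) * 2 powr (real CARD('n) * real_of_int J)) + 1"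
proof -
  define s where "s = kappa_star x ^ CARD('n) * 2 powr (real CARD('n) * real_of_int J)"
  have "inj_on (\<lambda>n. real (a n)) F"
    using strict_mono_on_eqD[OF mono] F by (fastforce simp: inj_on_def)
  then have "card F = card ((\<lambda>n. real (a n)) ` F)"
    by (simp add: card_image)
  also have "real \<dots> \<le> real (a N) / s + 1"
  proof (rule card_le_of_separated)
    show "(\<lambda>n. real (a n)) ` F \<subseteq> {0..real (a N)}"
      using F strict_mono_on_leD[OF mono] by auto
    show "0 < s"
      using kappa by (simp add: s_def)
  next
    fix u v
    assume "u \<in> (\<lambda>n. real (a n)) ` F" "v \<in> (\<lambda>n. real (a n)) ` F" "u < v"
    then obtain n n' where "n \<in> F" "n' \<in> F" "u = real (a n)" "v = real (a n')" "a n < a n'"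
      by auto
    then show "s < v - u"
      using kappa_star_separation[of "a n" "a n'" x J k] cube by (simp add: s_def of_nat_diff)
  qed simp
  finally show ?thesis
    by (simp add: s_def)
qed

lemma card_visits_le_card_Mset:
  fixes a :: "nat \<Rightarrow> nat" and x :: "real^'n::finite"
  defines "y \<equiv> \<lambda>n. fracv (real (a n) *\<^sub>R x)"
  assumes mono: "strict_mono_on {1..} a" and kappa: "0 < kappa_star x" and J: "0 \<le> g + int j"
  defines "N \<equiv> 2 ^ (CARD('n) * nat (g + int j)) :: nat"
  shows "real (card {n \<in> {1..N}. y n \<in> dyadic_cube g k})
    \<le> real (card (Mset y (dyadic_cube g k) j)) * (real (a N) / (kappa_star x ^ CARD('n) * real N) + 1)"
proof -
  define S where "S = {n \<in> {1..N}. y n \<in> dyadic_cube g k}"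
  define \<phi> where "\<phi> n = dyadic_cube_of (g + int j) (y n)" for n
  have "real (card {n \<in> S. \<phi> n = \<phi> n0}) \<le> real (a N) / (kappa_star x ^ CARD('n) * real N) + 1" for n0
  proof -
    obtain kk where kk: "\<phi> n0 = dyadic_cube (g + int j) kk"
      by (simp add: \<phi>_def dyadic_cube_of_def)
    have "y n \<in> \<phi> n0" if "n \<in> {n \<in> S. \<phi> n = \<phi> n0}" for n
      using that mem_dyadic_cube_of[of "y n"] by (auto simp: \<phi>_def)
    then have "real (card {n \<in> S. \<phi> n = \<phi> n0})
        \<le> real (a N) / (kappa_star x ^ CARD('n) * 2 powr (real CARD('n) * real_of_int (g + int j))) + 1"
      by (intro card_same_dyadic_cube_le[OF mono kappa]) (auto simp: S_def y_def kk)
    then show ?thesis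
      unfolding two_powr_eq_power_nat[OF J] N_def .
  qed
  then have "real (card S) \<le> real (card (\<phi> ` S)) * (real (a N) / (kappa_star x ^ CARD('n) * real N) + 1)"
    by (intro card_le_card_image_mult) (auto simp: S_def)
  moreover have "\<phi> ` S = Mset y (dyadic_cube g k) j"
    unfolding \<phi>_def S_def N_def by (rule Mset_dyadic_cube_eq_image[OF J, symmetric])
  ultimately show ?thesis
    by (simp only: S_def)
qed

lemma covering_count_lower_bound:
  fixes P M A N u v k :: real
  assumes count: "P \<le> M * (A / (k * N) + 1)" and freq: "u * N < P" and density: "v * A < N"
    and "0 < u" "0 < v" "v \<le> 1" "0 < k" "k \<le> 1" "0 < N" "0 \<le> M"
  shows "u * v * k * N \<le> 2 * M"
proof -
  have vk: "0 < v * k" "v * k \<le> 1"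
    using assms by (auto simp: mult_le_one)
  have "A / (k * N) < 1 / (v * k)"
    using density assms by (simp add: field_simps)
  also have "1 / (v * k) \<le> 2 / (v * k) - 1"
    using vk by (simp add: field_simps)
  finally have "A / (k * N) + 1 \<le> 2 / (v * k)"
    by simp
  then have "u * N < M * (2 / (v * k))"
    using count freq mult_left_mono[OF _ \<open>0 \<le> M\<close>] by (meson less_le_trans)
  then show ?thesis
    using vk by (simp add: field_simps)
qed

lemma card_Mset_lower_bound:
  fixes a :: "nat \<Rightarrow> nat" and x :: "real^'n::finite"
  assumes mono: "strict_mono_on {1..} a" and kappa: "0 < kappa_star x" and J: "0 \<le> g + int j"
  defines "N \<equiv> 2 ^ (CARD('n) * nat (g + int j)) :: nat"
  assumes freq: "u * real N < real (card {n \<in> {1..N}. fracv (real (a n) *\<^sub>R x) \<in> dyadic_cube g k})"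
    and density: "v * real (a N) < real N" and "0 < u" "0 < v" "v \<le> 1"
  shows "kappa_star x ^ CARD('n) / (2 ^ CARD('n) * measure lborel (dyadic_cube g k)) * v * u
    \<le> 2 powr (- real CARD('n) * real j) * real (card (Mset (\<lambda>n. fracv (real (a n) *\<^sub>R x)) (dyadic_cube g k) j))"
proof -
  define d where "d = CARD('n)"
  define \<kappa> where "\<kappa> = kappa_star x ^ d"
  define L where "L = measure lborel (dyadic_cube g k :: (real^'n) set)"
  define M where "M = real (card (Mset (\<lambda>n. fracv (real (a n) *\<^sub>R x)) (dyadic_cube g k) j))"
  have d: "1 \<le> d"
    by (simp add: d_def Suc_le_eq)
  have \<kappa>: "0 < \<kappa>" "\<kappa> \<le> 1"
    using kappa kappa_star_le_half[of x] by (auto simp: \<kappa>_def intro: power_le_one)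
  have L: "L = (2 powr (- real_of_int g)) ^ d"
    by (simp add: L_def d_def measure_dyadic_cube)
  then have "0 < L"
    by simp
  have "real (card {n \<in> {1..N}. fracv (real (a n) *\<^sub>R x) \<in> dyadic_cube g k})
      \<le> M * (real (a N) / (\<kappa> * real N) + 1)"
    using card_visits_le_card_Mset[OF mono kappa J] by (simp add: M_def \<kappa>_def d_def N_def)
  then have count: "u * v * \<kappa> * real N \<le> 2 * M"
    using covering_count_lower_bound freq density assms(7-9) \<kappa> by (simp add: M_def N_def)
  have scale: "2 powr (- real d * real j) * real N * L = 1"
    using J unfolding L N_def d_def
    by (simp add: powr_realpow[symmetric] powr_power powr_powr powr_add[symmetric] algebra_simps)
  have "\<kappa> / (2 ^ d * L) * v * u \<le> \<kappa> / (2 * L) * v * u"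
    using \<open>0 < L\<close> \<kappa> assms(7,8) d
    by (intro mult_right_mono divide_left_mono mult_left_mono) (auto simp: Suc_le_eq[symmetric] self_le_power)
  also have "\<dots> = 2 powr (- real d * real j) * (u * v * \<kappa> * real N) / 2"
    using scale \<open>0 < L\<close> by (simp add: field_simps)
  also have "\<dots> \<le> 2 powr (- real d * real j) * M"
    using count by simp
  finally show ?thesis
    unfolding \<kappa>_def d_def L_def M_def .
qed

section \<open>Passage to the limit\<close>

lemma liminf_card_ratio_bounds:
  assumes "\<And>N. A N \<subseteq> {1..N}"
  shows "0 \<le> liminf (\<lambda>N. ereal (real (card (A N)) / real N))"
    and "liminf (\<lambda>N. ereal (real (card (A N)) / real N)) \<le> 1"
proof -
  show "0 \<le> liminf (\<lambda>N. ereal (real (card (A N)) / real N))"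
    by (intro Liminf_bounded always_eventually) simp
  have "card (A N) \<le> N" for N
    using card_mono[OF _ assms[of N]] by simp
  then show "liminf (\<lambda>N. ereal (real (card (A N)) / real N)) \<le> 1"
    by (intro Liminf_le always_eventually) (auto simp: divide_le_eq_1)
qed

lemma lower_density_bounds:
  assumes "strict_mono_on {1..} a" "1 \<le> a 1"
  shows "0 \<le> lower_density a" "lower_density a \<le> 1"
proof -
  have "{n. 1 \<le> n \<and> a n \<le> N} \<subseteq> {1..N}" for N
    using strict_mono_on_ge_self[OF assms] by fastforce
  then show "0 \<le> lower_density a" "lower_density a \<le> 1"
    unfolding lower_density_def by (fact liminf_card_ratio_bounds)+
qed

lemma lower_freq_bounds: "0 \<le> lower_freq y c" "lower_freq y c \<le> 1"
proof -
  have "{n \<in> {1..N}. fracv (y n) \<in> c} \<subseteq> {1..N}" for N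
    by auto
  then show "0 \<le> lower_freq y c" "lower_freq y c \<le> 1"
    unfolding lower_freq_def by (fact liminf_card_ratio_bounds)+
qed

lemma ereal_mult_le_of_approx:
  fixes K s r :: real and l :: ereal
  assumes "0 \<le> s" "0 \<le> r" "0 \<le> l"
    and approx: "\<And>s' r'. 0 < s' \<Longrightarrow> s' < s \<Longrightarrow> 0 < r' \<Longrightarrow> r' < r \<Longrightarrow> ereal (K * s' * r') \<le> l"
  shows "ereal (K * s * r) \<le> l"
proof (rule dense_le)
  fix z
  assume z: "z < ereal (K * s * r)"
  show "z \<le> l"
  proof (cases "z \<le> 0")
    case True
    with \<open>0 \<le> l\<close> show ?thesis
      by simp
  next
    case False
    then obtain w where w: "z = ereal w" "0 < w" "w < K * s * r"
      using z by (cases z) auto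
    then have "s \<noteq> 0" "r \<noteq> 0"
      by auto
    then have "0 < s" "0 < r"
      using assms(1,2) by auto
    moreover have "0 < K * (s * r)"
      using w by (simp add: mult.assoc)
    ultimately have pos: "0 < K" "0 < s" "0 < r"
      by (auto intro: zero_less_mult_pos2)
    \<comment> \<open>Shrink both factors by the same ratio \<open>t\<close>, so that their product with \<open>K\<close> is exactly \<open>w\<close>.\<close>
    define t where "t = sqrt (w / (K * s * r))"
    have t: "0 < t" "t < 1"
      using w pos by (auto simp: t_def real_sqrt_lt_1_iff)
    have "K * (t * s) * (t * r) = (t * t) * (K * s * r)"
      by (simp add: algebra_simps)
    also have "\<dots> = w"
      using w pos by (simp add: t_def)
    finally have "ereal w = ereal (K * (t * s) * (t * r))"
      by simp
    also have "\<dots> \<le> l"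
      using t pos by (intro approx) auto
    finally show ?thesis
      using w(1) by simp
  qed
qed

lemma eventually_card_Mset_lower_bound:
  fixes a :: "nat \<Rightarrow> nat" and x :: "real^'n::finite"
  assumes mono: "strict_mono_on {1..} a" and a1: "1 \<le> a 1" and kappa: "0 < kappa_star x"
    and u: "0 < u" "ereal u < lower_freq (\<lambda>n. real (a n) *\<^sub>R x) (dyadic_cube g k)"
    and v: "0 < v" "v \<le> 1" "ereal v < lower_density a"
  shows "eventually (\<lambda>j. kappa_star x ^ CARD('n) / (2 ^ CARD('n) * measure lborel (dyadic_cube g k)) * v * u
      \<le> 2 powr (- real CARD('n) * real j)
        * real (card (Mset (\<lambda>n. fracv (real (a n) *\<^sub>R x)) (dyadic_cube g k) j))) sequentially"
proof -
  obtain N1 where N1: "\<And>N. N1 \<le> N \<Longrightarrow>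
      u < real (card {n \<in> {1..N}. fracv (real (a n) *\<^sub>R x) \<in> dyadic_cube g k}) / real N"
    using less_LiminfD[OF u(2)[unfolded lower_freq_def]] unfolding eventually_sequentially by auto
  obtain M1 where M1: "\<And>M. M1 \<le> M \<Longrightarrow> v < real (card {n. 1 \<le> n \<and> a n \<le> M}) / real M"
    using less_LiminfD[OF v(3)[unfolded lower_density_def]] unfolding eventually_sequentially by auto
  show ?thesis
    unfolding eventually_sequentially
  proof (intro exI allI impI)
    fix j
    assume j: "nat (- g) + N1 + M1 + 1 \<le> j"
    define N :: nat where "N = 2 ^ (CARD('n) * nat (g + int j))"
    have J: "0 \<le> g + int j" "N1 + M1 + 1 \<le> nat (g + int j)"
      using j by auto
    have "nat (g + int j) < 2 ^ nat (g + int j)"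
      by (rule less_exp)
    also have "(2::nat) ^ nat (g + int j) \<le> N"
      unfolding N_def by (intro power_increasing) (auto simp: Suc_le_eq)
    finally have N: "N1 \<le> N" "M1 \<le> N" "1 \<le> N"
      using J(2) by auto
    have aN: "N \<le> a N"
      using strict_mono_on_ge_self[OF mono a1 N(3)] .
    have "{n. 1 \<le> n \<and> a n \<le> a N} = {1..N}"
      using strict_mono_on_less_eq[OF mono] N(3) by auto
    then have "v < real N / real (a N)"
      using M1[of "a N"] N(2) aN by simp
    then have density: "v * real (a N) < real N"
      using aN N(3) by (simp add: field_simps)
    have freq: "u * real N < real (card {n \<in> {1..N}. fracv (real (a n) *\<^sub>R x) \<in> dyadic_cube g k})"
      using N1[OF N(1)] N(3) by (simp add: field_simps)
    show "kappa_star x ^ CARD('n) / (2 ^ CARD('n) * measure lborel (dyadic_cube g k)) * v * u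
      \<le> 2 powr (- real CARD('n) * real j)
        * real (card (Mset (\<lambda>n. fracv (real (a n) *\<^sub>R x)) (dyadic_cube g k) j))"
      using card_Mset_lower_bound[OF mono kappa J(1)] freq density u(1) v(1,2) unfolding N_def by blast
  qed
qed

lemma liminf_card_Mset_ge:
  fixes a :: "nat \<Rightarrow> nat" and x :: "real^'n::finite"
  assumes mono: "strict_mono_on {1..} a" and a1: "1 \<le> a 1"
    and "0 < u" "ereal u < lower_freq (\<lambda>n. real (a n) *\<^sub>R x) (dyadic_cube g k)"
    and "0 < v" "v \<le> 1" "ereal v < lower_density a"
  shows "ereal (kappa_star x ^ CARD('n) / (2 ^ CARD('n) * measure lborel (dyadic_cube g k)) * v * u)
    \<le> liminf (\<lambda>j. ereal (2 powr (- real CARD('n) * real j)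
        * real (card (Mset (\<lambda>n. fracv (real (a n) *\<^sub>R x)) (dyadic_cube g k) j))))"
proof (cases "kappa_star x = 0")
  case True
  then show ?thesis
    by (intro Liminf_bounded always_eventually) (simp add: power_0_left)
next
  case False
  then have "0 < kappa_star x"
    using kappa_star_nonneg[of x] by simp
  from eventually_card_Mset_lower_bound[OF mono a1 this assms(3-7)] show ?thesis
    by (intro Liminf_bounded) (auto elim: eventually_mono)
qed

theorem proposition11p5:
  fixes a :: "nat \<Rightarrow> nat" and x :: "real^'n::finite" and c :: "(real^'n) set"
  assumes "strict_mono_on {1..} a"
    and "\<And>n. n \<ge> 1 \<Longrightarrow> a n > 0"
    and "c \<in> dyadic_cubes" and "c \<noteq> {}" and "c \<subseteq> unit_cube"
  shows "liminf (\<lambda>j. ereal (2 powr (- real CARD('n) * real j)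
             * real (card (Mset (\<lambda>n. fracv (real (a n) *\<^sub>R x)) c j))))
         \<ge> ereal (kappa_star x ^ CARD('n) / (2 ^ CARD('n) * measure lborel c))
             * lower_density a * lower_freq (\<lambda>n. real (a n) *\<^sub>R x) c"
proof -
  have a1: "1 \<le> a 1"
    using assms(2)[of 1] by simp
  obtain g k where c: "c = dyadic_cube g k"
    using assms(3) unfolding dyadic_cubes_def by blast
  obtain s where s: "lower_density a = ereal s" "0 \<le> s" "s \<le> 1"
    using lower_density_bounds[OF assms(1) a1] by (cases "lower_density a") auto
  obtain r where r: "lower_freq (\<lambda>n. real (a n) *\<^sub>R x) c = ereal r" "0 \<le> r"
    using lower_freq_bounds[of "\<lambda>n. real (a n) *\<^sub>R x" c] by (cases "lower_freq (\<lambda>n. real (a n) *\<^sub>R x) c") auto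
  define l where "l = liminf (\<lambda>j. ereal (2 powr (- real CARD('n) * real j)
    * real (card (Mset (\<lambda>n. fracv (real (a n) *\<^sub>R x)) c j))))"
  have "ereal (kappa_star x ^ CARD('n) / (2 ^ CARD('n) * measure lborel c) * s * r) \<le> l"
  proof (rule ereal_mult_le_of_approx[OF s(2) r(2)])
    show "0 \<le> l"
      unfolding l_def by (intro Liminf_bounded always_eventually) simp
    fix s' r'
    assume "0 < s'" "s' < s" "0 < r'" "r' < r"
    with s r show "ereal (kappa_star x ^ CARD('n) / (2 ^ CARD('n) * measure lborel c) * s' * r') \<le> l"
      unfolding l_def c by (intro liminf_card_Mset_ge[OF assms(1) a1]) simp_all
  qed
  then show ?thesis
    by (simp add: l_def s r)
qed

end
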